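(* Let $Q$ be an automorphic loop satisfying condition (C) (for all $a,b\in Q$: $a(ab)=(ba)a$ if and only if $ab=ba$), and let $x,y\in Q$. If $xyx^{-1}=x^{-1}yx$, then the subloop $\langle x,y\rangle$ generated by $x$ and $y$ is commutative.
   Context: A loop is a set with a binary operation in which all equations $ax=b$, $ya=b$ are uniquely solvable and which has a two-sided identity. For $a\in L$, $R_a:x\mapsto xa$, $L_a:x\mapsto ax$; the inner mapping group is the stabilizer of the identity in the group generated by all $R_a,L_a$. A loop is automorphic if every inner mapping is an automorphism. Automorphic loops are power associative and satisfy $(x^m u)x^n=x^m(ux^n)$ for all integers $m,n$, so $xyx^{-1}$ and $x^{-1}yx$ are unambiguous. The subloop generated by a subset $S$ is the intersection of all subloops containing $S$. *)

theory Defs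
  imports Main
begin

text \<open>A loop is represented on the whole of a type 'a, with multiplication m and identity e.\<close>

definition is_loop :: "('a \<Rightarrow> 'a \<Rightarrow> 'a) \<Rightarrow> 'a \<Rightarrow> bool" where
  "is_loop m e \<longleftrightarrow>
     (\<forall>a b. \<exists>!x. m a x = b) \<and> (\<forall>a b. \<exists>!y. m y a = b) \<and>
     (\<forall>x. m e x = x \<and> m x e = x)"

definition ldiv :: "('a \<Rightarrow> 'a \<Rightarrow> 'a) \<Rightarrow> 'a \<Rightarrow> 'a \<Rightarrow> 'a" where
  "ldiv m a b = (THE x. m a x = b)"

definition rdiv :: "('a \<Rightarrow> 'a \<Rightarrow> 'a) \<Rightarrow> 'a \<Rightarrow> 'a \<Rightarrow> 'a" where
  "rdiv m b a = (THE y. m y a = b)"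

text \<open>Inverse of x: the unique y with x y = e (two-sided in automorphic loops).\<close>
definition loop_inv :: "('a \<Rightarrow> 'a \<Rightarrow> 'a) \<Rightarrow> 'a \<Rightarrow> 'a \<Rightarrow> 'a" where
  "loop_inv m e x = (THE y. m x y = e)"

inductive_set mlt_group :: "('a \<Rightarrow> 'a \<Rightarrow> 'a) \<Rightarrow> ('a \<Rightarrow> 'a) set" for m where
  mlt_id: "id \<in> mlt_group m"
| mlt_R: "f \<in> mlt_group m \<Longrightarrow> (\<lambda>x. m x a) \<circ> f \<in> mlt_group m"
| mlt_L: "f \<in> mlt_group m \<Longrightarrow> (\<lambda>x. m a x) \<circ> f \<in> mlt_group m"
| mlt_Rinv: "f \<in> mlt_group m \<Longrightarrow> inv (\<lambda>x. m x a) \<circ> f \<in> mlt_group m"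
| mlt_Linv: "f \<in> mlt_group m \<Longrightarrow> inv (\<lambda>x. m a x) \<circ> f \<in> mlt_group m"

definition inner_mapping_group :: "('a \<Rightarrow> 'a \<Rightarrow> 'a) \<Rightarrow> 'a \<Rightarrow> ('a \<Rightarrow> 'a) set" where
  "inner_mapping_group m e = {f \<in> mlt_group m. f e = e}"

definition automorphic_loop :: "('a \<Rightarrow> 'a \<Rightarrow> 'a) \<Rightarrow> 'a \<Rightarrow> bool" where
  "automorphic_loop m e \<longleftrightarrow> is_loop m e \<and>
     (\<forall>f \<in> inner_mapping_group m e. bij f \<and> (\<forall>x y. f (m x y) = m (f x) (f y)))"

definition condition_C :: "('a \<Rightarrow> 'a \<Rightarrow> 'a) \<Rightarrow> bool" where
  "condition_C m \<longleftrightarrow> (\<forall>a b. m a (m a b) = m (m b a) a \<longleftrightarrow> m a b = m b a)"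

definition is_subloop :: "('a \<Rightarrow> 'a \<Rightarrow> 'a) \<Rightarrow> 'a \<Rightarrow> 'a set \<Rightarrow> bool" where
  "is_subloop m e S \<longleftrightarrow> e \<in> S \<and>
     (\<forall>a\<in>S. \<forall>b\<in>S. m a b \<in> S \<and> ldiv m a b \<in> S \<and> rdiv m a b \<in> S)"

definition subloop_generated :: "('a \<Rightarrow> 'a \<Rightarrow> 'a) \<Rightarrow> 'a \<Rightarrow> 'a set \<Rightarrow> 'a set" where
  "subloop_generated m e A = \<Inter>{S. is_subloop m e S \<and> A \<subseteq> S}"

end

theory Submission
  imports Defs
begin

text \<open>
  In an automorphic loop the inner mappings \<open>T u z = u\<setminus>(zu)\<close> and
  \<open>L a b z = (ba)\<setminus>(b(az))\<close> are automorphisms. Applying \<open>L c w\<close> with \<open>wc = u\<close> to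
  \<open>c\<^sup>-\<^sup>1c = e\<close> gives \<open>T u w = (u\<setminus>w\<^sup>2)(u\<setminus>w)\<^sup>-\<^sup>1\<close>, and two instances of this formula
  yield \<open>T x y = x\<^sup>-\<^sup>1(y/x\<^sup>-\<^sup>1)\<close>, i.e. \<open>T (x\<^sup>-\<^sup>1)\<close> is the inverse of \<open>T x\<close>. As \<open>T (x\<^sup>-\<^sup>1)\<close>
  fixes \<open>x\<close>, the hypothesis \<open>xyx\<^sup>-\<^sup>1 = x\<^sup>-\<^sup>1yx\<close> says \<open>T (x\<^sup>-\<^sup>1) y = T x y\<close>, so
  \<open>T x (T x y) = y\<close>, which unfolds to \<open>x(xy) = (yx)x\<close>; condition (C) turns this into
  \<open>xy = yx\<close>. The centralizer of \<open>c\<close> is the fixed-point set of \<open>T c\<close>, hence a subloop,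
  so two commuting elements generate a commutative subloop.
\<close>

lemma is_subloop_Inter:
  assumes "\<And>S. S \<in> F \<Longrightarrow> is_subloop m e S"
  shows "is_subloop m e (\<Inter>F)"
  using assms unfolding is_subloop_def by blast

lemma subloop_generated_least:
  assumes "is_subloop m e S" and "A \<subseteq> S"
  shows "subloop_generated m e A \<subseteq> S"
  using assms unfolding subloop_generated_def by blast

locale loop =
  fixes mult :: "'a \<Rightarrow> 'a \<Rightarrow> 'a" (infixl "\<cdot>" 70)
    and e :: 'a
  assumes is_loop: "is_loop (\<cdot>) e"
begin

abbreviation ld :: "'a \<Rightarrow> 'a \<Rightarrow> 'a" where "ld \<equiv> ldiv (\<cdot>)"
abbreviation rd :: "'a \<Rightarrow> 'a \<Rightarrow> 'a" where "rd \<equiv> rdiv (\<cdot>)"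
abbreviation inverse :: "'a \<Rightarrow> 'a" ("_\<^sup>-\<^sup>1" [1000] 999) where "x\<^sup>-\<^sup>1 \<equiv> loop_inv (\<cdot>) e x"

lemma mult_ldiv [simp]: "a \<cdot> ld a b = b"
proof -
  have "\<exists>!x. a \<cdot> x = b" using is_loop by (simp add: is_loop_def)
  then show ?thesis unfolding ldiv_def by (rule theI')
qed

lemma mult_rdiv [simp]: "rd b a \<cdot> a = b"
proof -
  have "\<exists>!y. y \<cdot> a = b" using is_loop by (simp add: is_loop_def)
  then show ?thesis unfolding rdiv_def by (rule theI')
qed

lemma ldiv_mult [simp]: "ld a (a \<cdot> b) = b"
  using is_loop mult_ldiv unfolding is_loop_def by metis

lemma rdiv_mult [simp]: "rd (b \<cdot> a) a = b"
  using is_loop mult_rdiv unfolding is_loop_def by metis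

lemma unit_left [simp]: "e \<cdot> a = a" and unit_right [simp]: "a \<cdot> e = a"
  using is_loop unfolding is_loop_def by auto

lemma ldiv_self [simp]: "ld a a = e"
  by (metis ldiv_mult unit_right)

lemma ldiv_unit [simp]: "ld e a = a"
  by (metis ldiv_mult unit_left)

lemma cancel_left [simp]: "a \<cdot> b = a \<cdot> c \<longleftrightarrow> b = c"
  by (metis ldiv_mult)

lemma cancel_right [simp]: "b \<cdot> a = c \<cdot> a \<longleftrightarrow> b = c"
  by (metis rdiv_mult)

lemma mult_inverse [simp]: "x \<cdot> x\<^sup>-\<^sup>1 = e"
  by (simp add: loop_inv_def ldiv_def[symmetric])

lemma inverse_unique: "x \<cdot> y = e \<Longrightarrow> y = x\<^sup>-\<^sup>1"
  by (metis cancel_left mult_inverse)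

lemma is_subloop_fixed_points:
  assumes hom: "\<And>a b. f (a \<cdot> b) = f a \<cdot> f b"
  shows "is_subloop (\<cdot>) e {a. f a = a}"
  unfolding is_subloop_def
proof (intro conjI ballI; clarsimp)
  show "f e = e" using hom[of e e] by (metis cancel_right unit_left)
  fix a b assume a: "f a = a" and b: "f b = b"
  show "f (a \<cdot> b) = a \<cdot> b" by (simp add: hom a b)
  show "f (ld a b) = ld a b" using hom[of a "ld a b"] by (simp add: a b) (metis ldiv_mult)
  show "f (rd a b) = rd a b" using hom[of "rd a b" b] by (simp add: a b) (metis rdiv_mult)
qed

definition T :: "'a \<Rightarrow> 'a \<Rightarrow> 'a" where "T u z = ld u (z \<cdot> u)"
definition L :: "'a \<Rightarrow> 'a \<Rightarrow> 'a \<Rightarrow> 'a" where "L a b z = ld (b \<cdot> a) (b \<cdot> (a \<cdot> z))"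

lemma inv_left_mult: "inv (\<lambda>z. a \<cdot> z) = ld a"
  by (rule inv_equality) simp_all

end

locale automorphic = loop +
  assumes inner_mapping_automorphism:
    "\<And>f. f \<in> inner_mapping_group (\<cdot>) e \<Longrightarrow> f (a \<cdot> b) = f a \<cdot> f b"
begin

lemma inner_mapping_mult:
  assumes "f \<in> mlt_group (\<cdot>)" "f e = e"
  shows "f (a \<cdot> b) = f a \<cdot> f b"
  using assms inner_mapping_automorphism unfolding inner_mapping_group_def by blast

lemma T_mult: "T u (v \<cdot> w) = T u v \<cdot> T u w"
proof -
  have "ld u \<circ> ((\<lambda>z. z \<cdot> u) \<circ> id) \<in> mlt_group (\<cdot>)"
    unfolding inv_left_mult[symmetric] by (intro mlt_group.intros)
  from inner_mapping_mult[OF this] show ?thesis by (simp add: T_def)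
qed

lemma L_mult: "L a b (v \<cdot> w) = L a b v \<cdot> L a b w"
proof -
  have "ld (b \<cdot> a) \<circ> ((\<lambda>z. b \<cdot> z) \<circ> ((\<lambda>z. a \<cdot> z) \<circ> id)) \<in> mlt_group (\<cdot>)"
    unfolding inv_left_mult[symmetric] by (intro mlt_group.intros)
  from inner_mapping_mult[OF this] show ?thesis by (simp add: L_def)
qed

lemma T_mult_left: "T x (x \<cdot> y) = y \<cdot> x"
  using T_mult[of x x y] by (simp add: T_def)

lemma flexible: "(x \<cdot> y) \<cdot> x = x \<cdot> (y \<cdot> x)"
  using T_mult_left[of x y] unfolding T_def by (metis mult_ldiv)

lemma T_eq_ldiv: "T x y = ld x y \<cdot> x"
  using flexible[of x "ld x y"] by (simp add: T_def)

lemma inverse_mult [simp]: "x\<^sup>-\<^sup>1 \<cdot> x = e"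
  using T_eq_ldiv[of x e] by (simp add: T_def loop_inv_def ldiv_def[symmetric])

lemma inverse_inverse [simp]: "(x\<^sup>-\<^sup>1)\<^sup>-\<^sup>1 = x"
  by (metis inverse_mult inverse_unique)

lemma inverse_middle_assoc: "x\<^sup>-\<^sup>1 \<cdot> (z \<cdot> x) = (x\<^sup>-\<^sup>1 \<cdot> z) \<cdot> x"
proof -
  have "L (x\<^sup>-\<^sup>1) x (z \<cdot> x) = L (x\<^sup>-\<^sup>1) x z \<cdot> L (x\<^sup>-\<^sup>1) x x" by (rule L_mult)
  then have "x \<cdot> (x\<^sup>-\<^sup>1 \<cdot> (z \<cdot> x)) = x \<cdot> ((x\<^sup>-\<^sup>1 \<cdot> z) \<cdot> x)" by (simp add: L_def flexible)
  then show ?thesis by simp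
qed

lemma T_eq_square:
  "T u w = ld u (w \<cdot> w) \<cdot> (ld u w)\<^sup>-\<^sup>1"
proof -
  define c where "c = ld w u"
  have wc: "w \<cdot> c = u" by (simp add: c_def)
  have L_eq: "L c w z = ld u (w \<cdot> (c \<cdot> z))" for z by (simp add: L_def wc)
  have "L c w (c\<^sup>-\<^sup>1 \<cdot> c) = L c w (c\<^sup>-\<^sup>1) \<cdot> L c w c" by (rule L_mult)
  then have "ld u w \<cdot> L c w c = e" by (simp add: L_eq wc)
  then have Lc: "L c w c = (ld u w)\<^sup>-\<^sup>1" by (rule inverse_unique)
  have "ld c w \<cdot> c = ld c u" using T_eq_ldiv[of c w] by (simp add: T_def wc)
  then have "T u w = L c w (ld c w \<cdot> c)" by (simp add: L_eq T_def)
  also have "\<dots> = ld u (w \<cdot> w) \<cdot> (ld u w)\<^sup>-\<^sup>1" by (simp add: L_mult Lc) (simp add: L_eq)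
  finally show ?thesis .
qed

lemma square_eq_rdiv_mult_ldiv: "y \<cdot> y = rd y (x\<^sup>-\<^sup>1) \<cdot> ld x y"
proof -
  define u where "u = ld x y"
  define p where "p = (u \<cdot> x) \<cdot> (u \<cdot> x)"
  have "y = ld u p \<cdot> x\<^sup>-\<^sup>1"
    using T_eq_square[of u "u \<cdot> x"] T_mult_left[of u x] by (simp add: u_def p_def)
  then have "ld u p = rd y (x\<^sup>-\<^sup>1)" by simp
  moreover have "T u p = y \<cdot> y"
    using T_mult[of u "u \<cdot> x" "u \<cdot> x"] T_mult_left[of u x] by (simp add: u_def p_def)
  ultimately show ?thesis by (simp add: T_eq_ldiv u_def)
qed

lemma T_eq_inverse: "T x y = x\<^sup>-\<^sup>1 \<cdot> rd y (x\<^sup>-\<^sup>1)"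
proof -
  define u where "u = rd y (x\<^sup>-\<^sup>1)"
  have u_ldiv: "ld u y = x\<^sup>-\<^sup>1" by (metis ldiv_mult mult_rdiv u_def)
  have u_square: "ld u (y \<cdot> y) = ld x y" by (metis ldiv_mult square_eq_rdiv_mult_ldiv u_def)
  have "T x y = T u y" using T_eq_square[of u y] u_ldiv u_square by (simp add: T_eq_ldiv)
  also have "\<dots> = x\<^sup>-\<^sup>1 \<cdot> u" using u_ldiv by (simp add: T_eq_ldiv)
  finally show ?thesis by (simp add: u_def)
qed

lemma T_T_inverse: "T x (T (x\<^sup>-\<^sup>1) y) = y"
proof -
  have "T (x\<^sup>-\<^sup>1) y = ld (x\<^sup>-\<^sup>1) y \<cdot> x\<^sup>-\<^sup>1" by (rule T_eq_ldiv)
  then show ?thesis by (simp add: T_eq_inverse[of x])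
qed

lemma square_commute_if_conjugates_eq:
  assumes "(x \<cdot> y) \<cdot> x\<^sup>-\<^sup>1 = (x\<^sup>-\<^sup>1 \<cdot> y) \<cdot> x"
  shows "x \<cdot> (x \<cdot> y) = (y \<cdot> x) \<cdot> x"
proof -
  have "T (x\<^sup>-\<^sup>1) x = x" by (simp add: T_def) (metis inverse_mult ldiv_mult)
  moreover have "T (x\<^sup>-\<^sup>1) (x \<cdot> y) = y \<cdot> x"
    using assms by (simp add: T_def inverse_middle_assoc[symmetric])
  ultimately have "x \<cdot> T (x\<^sup>-\<^sup>1) y = y \<cdot> x" by (simp add: T_mult)
  then have "T (x\<^sup>-\<^sup>1) y = T x y" by (simp add: T_def) (metis ldiv_mult)
  then have "x \<cdot> y = T x y \<cdot> x" using T_T_inverse[of x y] by (simp add: T_def) (metis mult_ldiv)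
  then show ?thesis by (simp add: T_def flexible[symmetric])
qed

lemma is_subloop_centralizer: "is_subloop (\<cdot>) e {a. a \<cdot> c = c \<cdot> a}"
proof -
  have "{a. a \<cdot> c = c \<cdot> a} = {a. T c a = a}" by (auto simp: T_def) (metis mult_ldiv)
  then show ?thesis using is_subloop_fixed_points[of "T c"] T_mult by simp
qed

end

theorem corollary3p2:
  fixes m :: "'a \<Rightarrow> 'a \<Rightarrow> 'a" and e x y :: 'a
  assumes "automorphic_loop m e"
    and "condition_C m"
    and "m (m x y) (loop_inv m e x) = m (m (loop_inv m e x) y) x"
  shows "\<forall>a \<in> subloop_generated m e {x, y}. \<forall>b \<in> subloop_generated m e {x, y}. m a b = m b a"
proof -
  interpret automorphic m e
    using assms(1) unfolding automorphic_loop_def by unfold_locales blast+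
  have xy: "m x y = m y x"
    using assms(2) square_commute_if_conjugates_eq[OF assms(3)] unfolding condition_C_def by blast
  define H where "H = subloop_generated m e {x, y}"
  have H_cent: "H \<subseteq> {b. m b a = m a b}" if "a \<in> {x, y}" for a
    unfolding H_def using that xy by (intro subloop_generated_least[OF is_subloop_centralizer]) auto
  have "m a c = m c a" if "a \<in> {x, y}" and "c \<in> H" for a c
    using H_cent[OF that(1)] that(2) by (metis (mono_tags) mem_Collect_eq subsetD)
  then have "{x, y} \<subseteq> (\<Inter>c \<in> H. {a. m a c = m c a})" by simp
  then have "H \<subseteq> (\<Inter>c \<in> H. {a. m a c = m c a})"
    unfolding H_def by (intro subloop_generated_least is_subloop_Inter) (auto intro: is_subloop_centralizer)
  then show ?thesis by (auto simp: H_def)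
qed

end
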